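(* Let $G=(V,E)$ be a directed unweighted graph with diameter $D=3h+z$, where $h\ge1$ and $z\in\{0,1,2\}$, and let $s\in[1,n]$. If $\hat D$ is the output of Approx-Diam$(G)$, then $2h+z\le\hat D\le 3h+z$.
   Context: $d(u,v)$ is the shortest-path distance from $u$ to $v$. $N_s^{\mathrm{out}}(v)$ (resp. $N_s^{\mathrm{in}}(v)$) is the set of the $s$ vertices $u$ with smallest $d(v,u)$ (resp. $d(u,v)$), ties broken by smaller id; $d_s^{\mathrm{out}}(v)=\max_{u\in N_s^{\mathrm{out}}(v)}d(v,u)$, $d_s^{\mathrm{in}}(v)=\max_{u\in N_s^{\mathrm{in}}(v)}d(u,v)$. $B^{\mathrm{out}}(v,r)=\{u: d(v,u)\le r\}$, $B^{\mathrm{in}}(v,r)=\{u:d(u,v)\le r\}$. The Aingworth et al. estimate AGG$_s(G)$ is the maximum of $d^{\mathrm{out}}(w)$, $\max_{u\in N_s^{\mathrm{out}}(w)}d^{\mathrm{in}}(u)$ and $\max_{u\in S}d^{\mathrm{out}}(u)$, where $w$ maximizes $d_s^{\mathrm{out}}$, $S$ is a set meeting every $N_s^{\mathrm{out}}(v)$, $d^{\mathrm{out}}(v)=\max_u d(v,u)$, $d^{\mathrm{in}}(v)=\max_u d(u,v)$. Approx-Diam$(G)$: set $\hat D=\max(\mathrm{AGG}_s(G),\mathrm{AGG}_s(G^R))$, where $G^R$ is $G$ with edges reversed; then for every ordered pair of distinct vertices $(u,v)$ such that $B^{\mathrm{out}}(u,d_s^{\mathrm{out}}(u)-1)\cap B^{\mathrm{in}}(v,d_s^{\mathrm{in}}(v)-1)=\emptyset$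 and there is no edge $(u',v')\in E$ with $u'\in B^{\mathrm{out}}(u,d_s^{\mathrm{out}}(u)-1)$, $v'\in B^{\mathrm{in}}(v,d_s^{\mathrm{in}}(v)-1)$, set $\hat D\gets\max(\hat D,d_s^{\mathrm{out}}(u)+d_s^{\mathrm{in}}(v))$; output $\hat D$. *)

theory Defs
  imports Main
begin

definition dist :: "('a \<times> 'a) set \<Rightarrow> 'a \<Rightarrow> 'a \<Rightarrow> nat" where
  "dist E u v = (LEAST k. (u, v) \<in> E ^^ k)"

definition diameter :: "'a set \<Rightarrow> ('a \<times> 'a) set \<Rightarrow> nat" where
  "diameter V E = Max {dist E u v | u v. u \<in> V \<and> v \<in> V}"

text \<open>Lexicographic strict order on (distance, id) used for tie breaking.\<close>
definition lexless :: "nat \<times> 'a::linorder \<Rightarrow> nat \<times> 'a \<Rightarrow> bool" where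
  "lexless p q = (fst p < fst q \<or> (fst p = fst q \<and> snd p < snd q))"

text \<open>The s vertices u with smallest d(v,u) (resp. d(u,v)), ties broken by smaller id.\<close>
definition Nout :: "'a::linorder set \<Rightarrow> ('a \<times> 'a) set \<Rightarrow> nat \<Rightarrow> 'a \<Rightarrow> 'a set" where
  "Nout V E s v = {u \<in> V. card {x \<in> V. lexless (dist E v x, x) (dist E v u, u)} < s}"

definition Nin :: "'a::linorder set \<Rightarrow> ('a \<times> 'a) set \<Rightarrow> nat \<Rightarrow> 'a \<Rightarrow> 'a set" where
  "Nin V E s v = {u \<in> V. card {x \<in> V. lexless (dist E x v, x) (dist E u v, u)} < s}"

definition dsout :: "'a::linorder set \<Rightarrow> ('a \<times> 'a) set \<Rightarrow> nat \<Rightarrow> 'a \<Rightarrow> nat" where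
  "dsout V E s v = Max ((\<lambda>u. dist E v u) ` Nout V E s v)"

definition dsin :: "'a::linorder set \<Rightarrow> ('a \<times> 'a) set \<Rightarrow> nat \<Rightarrow> 'a \<Rightarrow> nat" where
  "dsin V E s v = Max ((\<lambda>u. dist E u v) ` Nin V E s v)"

definition dout :: "'a set \<Rightarrow> ('a \<times> 'a) set \<Rightarrow> 'a \<Rightarrow> nat" where
  "dout V E v = Max ((\<lambda>u. dist E v u) ` V)"

definition din :: "'a set \<Rightarrow> ('a \<times> 'a) set \<Rightarrow> 'a \<Rightarrow> nat" where
  "din V E v = Max ((\<lambda>u. dist E u v) ` V)"

text \<open>Balls; the radius is an integer so that radius -1 gives the empty ball.\<close>
definition Bout :: "'a set \<Rightarrow> ('a \<times> 'a) set \<Rightarrow> 'a \<Rightarrow> int \<Rightarrow> 'a set" where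
  "Bout V E v r = {u \<in> V. int (dist E v u) \<le> r}"

definition Bin :: "'a set \<Rightarrow> ('a \<times> 'a) set \<Rightarrow> 'a \<Rightarrow> int \<Rightarrow> 'a set" where
  "Bin V E v r = {u \<in> V. int (dist E u v) \<le> r}"

text \<open>Admissible choices in the Aingworth et al. estimate: w maximizes d_s^out, and
  S is a set of vertices meeting every N_s^out(v).\<close>
definition valid_w :: "'a::linorder set \<Rightarrow> ('a \<times> 'a) set \<Rightarrow> nat \<Rightarrow> 'a \<Rightarrow> bool" where
  "valid_w V E s w = (w \<in> V \<and> (\<forall>v\<in>V. dsout V E s v \<le> dsout V E s w))"

definition valid_S :: "'a::linorder set \<Rightarrow> ('a \<times> 'a) set \<Rightarrow> nat \<Rightarrow> 'a set \<Rightarrow> bool" where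
  "valid_S V E s S = (S \<subseteq> V \<and> (\<forall>v\<in>V. S \<inter> Nout V E s v \<noteq> {}))"

definition AGG :: "'a::linorder set \<Rightarrow> ('a \<times> 'a) set \<Rightarrow> nat \<Rightarrow> 'a \<Rightarrow> 'a set \<Rightarrow> nat" where
  "AGG V E s w S = max (dout V E w)
     (max (Max (din V E ` Nout V E s w)) (Max (dout V E ` S)))"

definition pair_cond :: "'a::linorder set \<Rightarrow> ('a \<times> 'a) set \<Rightarrow> nat \<Rightarrow> 'a \<Rightarrow> 'a \<Rightarrow> bool" where
  "pair_cond V E s u v =
    (let Bo = Bout V E u (int (dsout V E s u) - 1);
         Bi = Bin V E v (int (dsin V E s v) - 1)
     in Bo \<inter> Bi = {} \<and> \<not> (\<exists>(u', v') \<in> E. u' \<in> Bo \<and> v' \<in> Bi))"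

text \<open>Output of Approx-Diam(G), given the choices (w, S) for G and (wR, SR) for the reverse graph.\<close>
definition approx_diam :: "'a::linorder set \<Rightarrow> ('a \<times> 'a) set \<Rightarrow> nat \<Rightarrow> 'a \<Rightarrow> 'a set \<Rightarrow> 'a \<Rightarrow> 'a set \<Rightarrow> nat" where
  "approx_diam V E s w S wR SR =
     Max (insert (max (AGG V E s w S) (AGG V (E\<inverse>) s wR SR))
       {dsout V E s u + dsin V E s v | u v. u \<in> V \<and> v \<in> V \<and> u \<noteq> v \<and> pair_cond V E s u v})"

end

theory Submission imports Defs begin

(* Upper bound: every quantity the algorithm maximises is a true distance or
   bounded by one.  The AGG terms are eccentricities; a pair (u, v) passing
   the ball test has d_s^out(u) + d_s^in(v) <= d(u, v), because a shortest
   u-v path must leave the out-ball of u before it enters the in-ball of v.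

   Lower bound: fix a diametral pair (a, b) with r = d_s^out(a), q = d_s^in(b).
   (1) Routing a -> b through a hitting-set vertex of N_s^out(a) gives
       AGG >= D - r;  (2) walking from w towards b inside N_s^out(w) gives
       AGG >= 2h + z or AGG >= D + r - (2h + z).  The same holds for q in the
       reverse graph.  (3) If (a, b) fails the ball test then r + q > D,
       otherwise r + q is itself a candidate.  A case split on r, q finishes. *)

text \<open>Every vertex reaches every other one; this is what makes all distances finite.\<close>
definition strongly_connected :: "'a set \<Rightarrow> ('a \<times> 'a) set \<Rightarrow> bool" where
  "strongly_connected V E = (\<forall>u\<in>V. \<forall>v\<in>V. (u, v) \<in> E\<^sup>*)"

lemma strongly_connected_converse:
  "strongly_connected V E \<Longrightarrow> strongly_connected V (E\<inverse>)"
  unfolding strongly_connected_def by (simp add: rtrancl_converse)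

section \<open>Shortest-path distances\<close>

lemma relpow_converse: "((R::('a \<times> 'a) set)\<inverse>) ^^ n = (R ^^ n)\<inverse>"
proof (induction n)
  case (Suc n)
  have "(R\<inverse>) ^^ Suc n = (R ^^ n)\<inverse> O R\<inverse>" using Suc by simp
  also have "\<dots> = (R ^^ Suc n)\<inverse>"
    by (simp only: relpow.simps(2) relpow_commute[symmetric] converse_relcomp)
  finally show ?case .
qed simp

lemma dist_converse: "dist (E\<inverse>) u v = dist E v u"
  unfolding dist_def by (simp add: relpow_converse)

lemma relpow_dist: "(u, v) \<in> E\<^sup>* \<Longrightarrow> (u, v) \<in> E ^^ dist E u v"
  unfolding dist_def by (rule LeastI_ex) (simp add: rtrancl_power)

lemma dist_le_walk: "(u, v) \<in> E ^^ k \<Longrightarrow> dist E u v \<le> k"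
  unfolding dist_def by (rule Least_le)

lemma dist_self: "dist E u u = 0"
  using dist_le_walk[where u = u and v = u and E = E and k = 0] by simp

lemma dist_edge: "(u, v) \<in> E \<Longrightarrow> dist E u v \<le> 1"
  by (rule dist_le_walk) simp

lemma dist_eq_0: "(u, v) \<in> E\<^sup>* \<Longrightarrow> dist E u v = 0 \<Longrightarrow> v = u"
  using relpow_dist[of u v E] by simp

lemma dist_triangle:
  assumes "(u, v) \<in> E\<^sup>*" and "(v, x) \<in> E\<^sup>*"
  shows "dist E u x \<le> dist E u v + dist E v x"
proof (rule dist_le_walk)
  show "(u, x) \<in> E ^^ (dist E u v + dist E v x)"
    using relpow_dist[OF assms(1)] relpow_dist[OF assms(2)] by (auto simp: relpow_add)
qed

lemma dist_triangle_sc: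
  assumes "strongly_connected V E" and "u \<in> V" and "v \<in> V" and "x \<in> V"
  shows "dist E u x \<le> dist E u v + dist E v x"
  using assms by (intro dist_triangle) (auto simp: strongly_connected_def)

lemma relpow_dist_sc:
  "strongly_connected V E \<Longrightarrow> u \<in> V \<Longrightarrow> v \<in> V \<Longrightarrow> (u, v) \<in> E ^^ dist E u v"
  by (intro relpow_dist) (auto simp: strongly_connected_def)

lemma relpow_add_split:
  "(u, v) \<in> (E::('a \<times> 'a) set) ^^ (m + n) \<Longrightarrow> \<exists>p. (u, p) \<in> E ^^ m \<and> (p, v) \<in> E ^^ n"
  by (simp add: relpow_add) blast

lemma relpow_closed:
  "(x, y) \<in> (E::('a \<times> 'a) set) ^^ k \<Longrightarrow> x \<in> V \<Longrightarrow> E \<subseteq> V \<times> V \<Longrightarrow> y \<in> V"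
  by (induction k arbitrary: y) (auto elim: relpow_Suc_E)

lemma diameter_bounds_and_attained:
  assumes "finite V" and "V \<noteq> {}"
  shows "\<forall>u\<in>V. \<forall>v\<in>V. dist E u v \<le> diameter V E"
    and "\<exists>a\<in>V. \<exists>b\<in>V. dist E a b = diameter V E"
proof -
  let ?DS = "{dist E u v | u v. u \<in> V \<and> v \<in> V}"
  have "?DS = (\<lambda>(u, v). dist E u v) ` (V \<times> V)" by auto
  then have fin: "finite ?DS" using assms(1) by simp
  show "\<forall>u\<in>V. \<forall>v\<in>V. dist E u v \<le> diameter V E"
    unfolding diameter_def using Max_ge[OF fin] by blast
  have "diameter V E \<in> ?DS"
    unfolding diameter_def by (rule Max_in[OF fin]) (use assms(2) in auto)
  then obtain a b where "a \<in> V" "b \<in> V" "diameter V E = dist E a b" by blast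
  then show "\<exists>a\<in>V. \<exists>b\<in>V. dist E a b = diameter V E" by metis
qed

text \<open>In-quantities of G are the out-quantities of the reverse graph; this lets
  every statement about out-neighbourhoods be reused for in-neighbourhoods.\<close>
lemma Nout_converse: "Nout V (E\<inverse>) s v = Nin V E s v"
  unfolding Nout_def Nin_def by (simp add: dist_converse)

lemma dsout_converse: "dsout V (E\<inverse>) s v = dsin V E s v"
  unfolding dsout_def dsin_def by (simp add: Nout_converse dist_converse)

section \<open>The s-neighbourhoods\<close>

lemma Nout_subset: "Nout V E s v \<subseteq> V"
  unfolding Nout_def by auto

lemma finite_Nout: "finite V \<Longrightarrow> finite (Nout V E s v)"
  using Nout_subset finite_subset by metis

text \<open>In a strongly connected graph v is the unique vertex at distance 0 from v,
  hence the first of its own s nearest vertices.\<close>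
lemma self_in_Nout:
  assumes sc: "strongly_connected V E" and v: "v \<in> V" and "1 \<le> s"
  shows "v \<in> Nout V E s v"
proof -
  have none_before: "{x \<in> V. lexless (dist E v x, x) (dist E v v, v)} = {}"
  proof (intro equals0I)
    fix x assume x: "x \<in> {x \<in> V. lexless (dist E v x, x) (dist E v v, v)}"
    then have "dist E v x = 0" and "x < v" by (auto simp: lexless_def dist_self)
    moreover have "(v, x) \<in> E\<^sup>*" using sc v x by (simp add: strongly_connected_def)
    ultimately show False using dist_eq_0[of v x E] by simp
  qed
  have "card {x \<in> V. lexless (dist E v x, x) (dist E v v, v)} = 0"
    by (simp only: none_before card.empty)
  then show ?thesis using assms unfolding Nout_def by simp
qed

lemma self_in_Nin:
  "strongly_connected V E \<Longrightarrow> v \<in> V \<Longrightarrow> 1 \<le> s \<Longrightarrow> v \<in> Nin V E s v"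
proof -
  assume "strongly_connected V E" "v \<in> V" "1 \<le> s"
  then have "v \<in> Nout V (E\<inverse>) s v" by (intro self_in_Nout strongly_connected_converse)
  then show "v \<in> Nin V E s v" by (simp only: Nout_converse)
qed

lemma dist_le_dsout: "finite V \<Longrightarrow> u \<in> Nout V E s v \<Longrightarrow> dist E v u \<le> dsout V E s v"
  unfolding dsout_def by (rule Max_ge) (simp_all add: finite_Nout)

text \<open>N_s^out(v) contains the whole open ball of radius d_s^out(v): a vertex closer
  than the farthest member is lexicographically smaller than that member.\<close>
lemma Nout_contains_ball:
  assumes fin: "finite V" and ne: "Nout V E s v \<noteq> {}" and u: "u \<in> V"
    and closer: "dist E v u < dsout V E s v"
  shows "u \<in> Nout V E s v"
proof -
  have "dsout V E s v \<in> (\<lambda>u. dist E v u) ` Nout V E s v"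
    unfolding dsout_def by (rule Max_in) (use fin ne in \<open>simp_all add: finite_Nout\<close>)
  then obtain y where y: "y \<in> Nout V E s v" and far: "dsout V E s v = dist E v y" by auto
  let ?before = "\<lambda>z. {x \<in> V. lexless (dist E v x, x) (dist E v z, z)}"
  have "?before u \<subseteq> ?before y" using closer far by (auto simp: lexless_def)
  then have "card (?before u) \<le> card (?before y)" by (simp add: card_mono fin)
  then show ?thesis using y u unfolding Nout_def by auto
qed

lemma dsout_le_bound:
  assumes "finite V" and "v \<in> Nout V E s v" and "\<forall>u\<in>V. \<forall>x\<in>V. dist E u x \<le> M"
  shows "dsout V E s v \<le> M"
  unfolding dsout_def using assms Nout_subset[of V E s v]
  by (subst Max_le_iff) (auto intro: finite_subset)

section \<open>The Aingworth et al. estimate\<close>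

lemma dist_le_dout: "finite V \<Longrightarrow> u \<in> V \<Longrightarrow> dist E v u \<le> dout V E v"
  unfolding dout_def by (rule Max_ge) auto

lemma dist_le_din: "finite V \<Longrightarrow> u \<in> V \<Longrightarrow> dist E u v \<le> din V E v"
  unfolding din_def by (rule Max_ge) auto

lemma dout_w_le_AGG: "dout V E w \<le> AGG V E s w S"
  unfolding AGG_def by simp

lemma din_Nout_le_AGG: "finite V \<Longrightarrow> u \<in> Nout V E s w \<Longrightarrow> din V E u \<le> AGG V E s w S"
  unfolding AGG_def
  by (simp add: le_max_iff_disj Max_ge_iff finite_Nout)

lemma dout_S_le_AGG: "finite V \<Longrightarrow> S \<subseteq> V \<Longrightarrow> x \<in> S \<Longrightarrow> dout V E x \<le> AGG V E s w S"
  unfolding AGG_def by (simp add: le_max_iff_disj Max_ge_iff finite_subset)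

lemma AGG_le_bound:
  assumes fin: "finite V" and sc: "strongly_connected V E" and "1 \<le> s"
    and w: "w \<in> V" and S: "S \<subseteq> V" "S \<noteq> {}"
    and bound: "\<forall>u\<in>V. \<forall>v\<in>V. dist E u v \<le> M"
  shows "AGG V E s w S \<le> M"
proof -
  have "V \<noteq> {}" using w by auto
  then have dout: "\<And>v. v \<in> V \<Longrightarrow> dout V E v \<le> M" and din: "\<And>v. v \<in> V \<Longrightarrow> din V E v \<le> M"
    using fin bound unfolding dout_def din_def by (simp_all add: Max_le_iff)
  have "Nout V E s w \<noteq> {}" using self_in_Nout[OF sc w \<open>1 \<le> s\<close>] by auto
  then show ?thesis
    using w S dout din fin Nout_subset[of V E s w] unfolding AGG_def
    by (auto simp: Max_le_iff finite_subset)
qed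

text \<open>First lower bound (via the hitting set S): a vertex x \<in> S \<inter> N_s^out(a)
  has d(x,b) \<ge> d(a,b) - d_s^out(a), and dout(x) is part of AGG.\<close>
lemma AGG_ge_via_hitting_set:
  assumes fin: "finite V" and sc: "strongly_connected V E"
    and S: "valid_S V E s S" and a: "a \<in> V" and b: "b \<in> V"
  shows "dist E a b \<le> AGG V E s w S + dsout V E s a"
proof -
  obtain x where x: "x \<in> S" "x \<in> Nout V E s a" using S a unfolding valid_S_def by blast
  have SV: "S \<subseteq> V" using S unfolding valid_S_def by simp
  with x have "x \<in> V" by auto
  have "dist E a b \<le> dist E a x + dist E x b"
    by (rule dist_triangle_sc[OF sc a \<open>x \<in> V\<close> b])
  also have "dist E a x \<le> dsout V E s a" by (rule dist_le_dsout[OF fin x(2)])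
  also have "dist E x b \<le> dout V E x" by (rule dist_le_dout[OF fin b])
  also have "dout V E x \<le> AGG V E s w S" by (rule dout_S_le_AGG[OF fin SV x(1)])
  finally show ?thesis by simp
qed

text \<open>Second lower bound (via w): unless dout(w) \<ge> m, walk from w towards b for
  min(d_s^out(w) - 1, d(w,b)) steps; the vertex u reached lies in N_s^out(w), so
  din(u) \<le> AGG, and d(u,b) is short.  Since d_s^out(w) \<ge> d_s^out(a) this gives
  m \<le> AGG or d(a,b) + d_s^out(a) \<le> AGG + m.\<close>
lemma AGG_ge_via_w:
  assumes fin: "finite V" and EV: "E \<subseteq> V \<times> V" and sc: "strongly_connected V E"
    and "1 \<le> s" and w: "valid_w V E s w" and a: "a \<in> V" and b: "b \<in> V"
    and r_pos: "1 \<le> dsout V E s a" and m: "m \<le> dist E a b"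
  shows "m \<le> AGG V E s w S \<or> dist E a b + dsout V E s a \<le> AGG V E s w S + m"
proof (cases "m \<le> dout V E w")
  case True
  then show ?thesis using dout_w_le_AGG[of V E w s S] by simp
next
  case False
  have wV: "w \<in> V" and r_le: "dsout V E s a \<le> dsout V E s w"
    using w a unfolding valid_w_def by auto
  have wb: "dist E w b < m" using False dist_le_dout[OF fin b, of E w] by simp
  define t where "t = min (dsout V E s w - 1) (dist E w b)"
  have "(w, b) \<in> E ^^ (t + (dist E w b - t))"
    using relpow_dist_sc[OF sc wV b] unfolding t_def by simp
  then obtain u where wu: "(w, u) \<in> E ^^ t" and ub: "(u, b) \<in> E ^^ (dist E w b - t)"
    by (blast dest: relpow_add_split)
  have uV: "u \<in> V" using relpow_closed[OF wu wV EV] .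
  have "dist E w u < dsout V E s w" using dist_le_walk[OF wu] r_pos r_le unfolding t_def by auto
  then have uN: "u \<in> Nout V E s w"
    using Nout_contains_ball[OF fin _ uV] self_in_Nout[OF sc wV \<open>1 \<le> s\<close>] by blast
  have "dist E a b \<le> dist E a u + dist E u b"
    by (rule dist_triangle_sc[OF sc a uV b])
  also have "dist E a u \<le> AGG V E s w S"
    using dist_le_din[OF fin a, of E u] din_Nout_le_AGG[OF fin uN, of S] by simp
  also have "dist E u b \<le> dist E w b - t" by (rule dist_le_walk[OF ub])
  finally have "dist E a b \<le> AGG V E s w S + (dist E w b - t)" by simp
  then show ?thesis using m wb r_le r_pos unfolding t_def by auto
qed

section \<open>The ball test\<close>

text \<open>A pair failing the test has a vertex or an edge linking the two open balls,
  so its distance is less than the sum of the radii.\<close>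
lemma ball_test_fails:
  assumes sc: "strongly_connected V E" and EV: "E \<subseteq> V \<times> V"
    and u: "u \<in> V" and v: "v \<in> V" and fails: "\<not> pair_cond V E s u v"
  shows "dist E u v + 1 \<le> dsout V E s u + dsin V E s v"
proof -
  let ?r = "dsout V E s u" and ?q = "dsin V E s v"
  from fails consider
      x where "x \<in> V" "int (dist E u x) \<le> int ?r - 1" "int (dist E x v) \<le> int ?q - 1"
    | p p' where "(p, p') \<in> E" "p \<in> V" "p' \<in> V"
        "int (dist E u p) \<le> int ?r - 1" "int (dist E p' v) \<le> int ?q - 1"
    unfolding pair_cond_def Let_def Bout_def Bin_def by blast
  then show ?thesis
  proof cases
    case (1 x)
    then show ?thesis using dist_triangle_sc[OF sc u \<open>x \<in> V\<close> v] by linarith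
  next
    case (2 p p')
    then show ?thesis using dist_triangle_sc[OF sc u \<open>p \<in> V\<close> v] dist_triangle_sc[OF sc \<open>p \<in> V\<close> \<open>p' \<in> V\<close> v] dist_edge[of p p' E]
      by linarith
  qed
qed

text \<open>A pair passing the test (with both radii positive) is at distance at least the
  sum of the radii: otherwise the vertex after d_s^out(u) - 1 steps of a shortest
  path lies in the out-ball and either it or its successor lies in the in-ball.\<close>
lemma ball_test_passes:
  assumes sc: "strongly_connected V E" and EV: "E \<subseteq> V \<times> V"
    and u: "u \<in> V" and v: "v \<in> V" and passes: "pair_cond V E s u v"
    and r_pos: "1 \<le> dsout V E s u" and q_pos: "1 \<le> dsin V E s v"
  shows "dsout V E s u + dsin V E s v \<le> dist E u v"
proof (rule ccontr)
  let ?r = "dsout V E s u" and ?q = "dsin V E s v"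
  define L where "L = dist E u v"
  assume "\<not> ?r + ?q \<le> dist E u v"
  then have short: "L < ?r + ?q" unfolding L_def by simp
  have path: "(u, v) \<in> E ^^ L"
    unfolding L_def by (rule relpow_dist_sc[OF sc u v])
  have disjoint: "\<And>x. x \<in> V \<Longrightarrow> int (dist E u x) \<le> int ?r - 1 \<Longrightarrow> int (dist E x v) \<le> int ?q - 1 \<Longrightarrow> False"
    and no_edge: "\<And>p p'. (p, p') \<in> E \<Longrightarrow> p \<in> V \<Longrightarrow> p' \<in> V \<Longrightarrow>
        int (dist E u p) \<le> int ?r - 1 \<Longrightarrow> int (dist E p' v) \<le> int ?q - 1 \<Longrightarrow> False"
    using passes unfolding pair_cond_def Let_def Bout_def Bin_def by blast+
  show False
  proof (cases "L \<le> ?r - 1")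
    case True
    then have "dist E u v < ?r" using r_pos unfolding L_def by linarith
    then show False using disjoint[OF v] q_pos by (simp add: dist_self)
  next
    case False
    then have "(u, v) \<in> E ^^ ((?r - 1) + Suc (L - ?r))" using path r_pos by (simp add: Suc_diff_le)
    then obtain p where up: "(u, p) \<in> E ^^ (?r - 1)" and pv: "(p, v) \<in> E ^^ Suc (L - ?r)"
      by (blast dest: relpow_add_split)
    then obtain p' where edge: "(p, p') \<in> E" and p'v: "(p', v) \<in> E ^^ (L - ?r)"
      by (blast elim: relpow_Suc_E2)
    have "p \<in> V" "p' \<in> V" using edge EV by auto
    then show False
      using no_edge[OF edge] dist_le_walk[OF up] dist_le_walk[OF p'v] r_pos short False by linarith
  qed
qed

lemma finite_candidates:
  "finite V \<Longrightarrow> finite {dsout V E s u + dsin V E s v | u v. u \<in> V \<and> v \<in> V \<and> u \<noteq> v \<and> pair_cond V E s u v}"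
  by (rule finite_subset[where B = "(\<lambda>(u, v). dsout V E s u + dsin V E s v) ` (V \<times> V)"]) auto

lemma approx_diam_ge_AGG:
  "finite V \<Longrightarrow> max (AGG V E s w S) (AGG V (E\<inverse>) s wR SR) \<le> approx_diam V E s w S wR SR"
  unfolding approx_diam_def by (rule Max_ge) (auto simp: finite_candidates)

lemma approx_diam_ge_pair:
  "finite V \<Longrightarrow> u \<in> V \<Longrightarrow> v \<in> V \<Longrightarrow> u \<noteq> v \<Longrightarrow> pair_cond V E s u v \<Longrightarrow>
    dsout V E s u + dsin V E s v \<le> approx_diam V E s w S wR SR"
  unfolding approx_diam_def by (rule Max_ge) (auto simp: finite_candidates)

text \<open>Every candidate value of a pair passing the test is bounded by any bound on
  the distances: either both radii are positive and the sum is at most d(u,v),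
  or the sum is a single radius.\<close>
lemma candidate_le_bound:
  assumes fin: "finite V" and EV: "E \<subseteq> V \<times> V" and sc: "strongly_connected V E" and "1 \<le> s"
    and u: "u \<in> V" and v: "v \<in> V" and passes: "pair_cond V E s u v"
    and bound: "\<forall>x\<in>V. \<forall>y\<in>V. dist E x y \<le> M"
  shows "dsout V E s u + dsin V E s v \<le> M"
proof (cases "1 \<le> dsout V E s u \<and> 1 \<le> dsin V E s v")
  case True
  then show ?thesis using ball_test_passes[OF sc EV u v passes] bound u v by fastforce
next
  case False
  have boundR: "\<forall>x\<in>V. \<forall>y\<in>V. dist (E\<inverse>) x y \<le> M" using bound by (simp add: dist_converse)
  have "dsin V E s v \<le> M"
    using dsout_le_bound[OF fin _ boundR, where s = s and v = v] self_in_Nin[OF sc v \<open>1 \<le> s\<close>]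
    by (simp add: Nout_converse dsout_converse)
  moreover have "dsout V E s u \<le> M"
    using dsout_le_bound[OF fin self_in_Nout[OF sc u \<open>1 \<le> s\<close>] bound] .
  ultimately show ?thesis using False by auto
qed

lemma approx_diam_le_bound:
  assumes fin: "finite V" and EV: "E \<subseteq> V \<times> V" and sc: "strongly_connected V E"
    and "1 \<le> s" and "V \<noteq> {}"
    and w: "valid_w V E s w" and S: "valid_S V E s S"
    and wR: "valid_w V (E\<inverse>) s wR" and SR: "valid_S V (E\<inverse>) s SR"
    and bound: "\<forall>u\<in>V. \<forall>v\<in>V. dist E u v \<le> M"
  shows "approx_diam V E s w S wR SR \<le> M"
proof -
  have scR: "strongly_connected V (E\<inverse>)" using strongly_connected_converse[OF sc] .
  have boundR: "\<forall>u\<in>V. \<forall>v\<in>V. dist (E\<inverse>) u v \<le> M" using bound by (simp add: dist_converse)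
  have "AGG V E s w S \<le> M"
    using AGG_le_bound[OF fin sc \<open>1 \<le> s\<close> _ _ _ bound] w S \<open>V \<noteq> {}\<close>
    unfolding valid_w_def valid_S_def by auto
  moreover have "AGG V (E\<inverse>) s wR SR \<le> M"
    using AGG_le_bound[OF fin scR \<open>1 \<le> s\<close> _ _ _ boundR] wR SR \<open>V \<noteq> {}\<close>
    unfolding valid_w_def valid_S_def by auto
  moreover have "dsout V E s u + dsin V E s v \<le> M"
    if "u \<in> V" "v \<in> V" "pair_cond V E s u v" for u v
    using candidate_le_bound[OF fin EV sc \<open>1 \<le> s\<close> that bound] .
  ultimately show ?thesis
    unfolding approx_diam_def
    by (subst Max_le_iff) (auto simp: finite_candidates fin)
qed

text \<open>The two AGG bounds for G and for the reverse graph, together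
  with the ball test on (a, b), leave no room for both radii to be wrong.\<close>
lemma approx_diam_ge_from_pair:
  assumes fin: "finite V" and EV: "E \<subseteq> V \<times> V" and sc: "strongly_connected V E" and s: "1 \<le> s"
    and w: "valid_w V E s w" and S: "valid_S V E s S"
    and wR: "valid_w V (E\<inverse>) s wR" and SR: "valid_S V (E\<inverse>) s SR"
    and a: "a \<in> V" and b: "b \<in> V" and ab: "dist E a b = 3 * h + z"
    and "1 \<le> h" and "z \<le> 2"
  shows "2 * h + z \<le> approx_diam V E s w S wR SR"
proof -
  have scR: "strongly_connected V (E\<inverse>)" using strongly_connected_converse[OF sc] .
  have EVR: "E\<inverse> \<subseteq> V \<times> V" using EV by auto
  have ba: "dist (E\<inverse>) b a = 3 * h + z" using ab by (simp add: dist_converse)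
  let ?out = "approx_diam V E s w S wR SR"
  let ?A = "AGG V E s w S" and ?AR = "AGG V (E\<inverse>) s wR SR"
  let ?r = "dsout V E s a" and ?q = "dsin V E s b"
  have A1: "3 * h + z \<le> ?A + ?r" using AGG_ge_via_hitting_set[OF fin sc S a b] ab by simp
  have A2: "1 \<le> ?r \<Longrightarrow> 2 * h + z \<le> ?A \<or> 3 * h + z + ?r \<le> ?A + (2 * h + z)"
    using AGG_ge_via_w[OF fin EV sc s w a b, of "2 * h + z"] ab by simp
  have AR1: "3 * h + z \<le> ?AR + ?q"
    using AGG_ge_via_hitting_set[OF fin scR SR b a] ba by (simp add: dsout_converse)
  have AR2: "1 \<le> ?q \<Longrightarrow> 2 * h + z \<le> ?AR \<or> 3 * h + z + ?q \<le> ?AR + (2 * h + z)"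
    using AGG_ge_via_w[OF fin EVR scR s wR b a, of "2 * h + z"] ba by (simp add: dsout_converse)
  have "a \<noteq> b" using ab \<open>1 \<le> h\<close> dist_self[of E a] by auto
  then have test: "?r + ?q \<le> ?out \<or> 3 * h + z + 1 \<le> ?r + ?q"
    using approx_diam_ge_pair[OF fin a b, of E s w S wR SR] ball_test_fails[OF sc EV a b, of s] ab
    by (cases "pair_cond V E s a b") auto
  have "max ?A ?AR \<le> ?out" by (rule approx_diam_ge_AGG[OF fin])
  then show ?thesis
    using A1 A2 AR1 AR2 test \<open>1 \<le> h\<close> \<open>z \<le> 2\<close> by (cases "1 \<le> ?r"; cases "1 \<le> ?q") auto
qed

theorem lemma8:
  fixes V :: "'a::linorder set" and E :: "('a \<times> 'a) set"
    and s h z :: nat and w wR :: 'a and S SR :: "'a set"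
  assumes "finite V" and "E \<subseteq> V \<times> V"
    and "\<forall>u\<in>V. \<forall>v\<in>V. (u, v) \<in> E\<^sup>*"
    and "diameter V E = 3 * h + z" and "h \<ge> 1" and "z \<le> 2"
    and "1 \<le> s" and "s \<le> card V"
    and "valid_w V E s w" and "valid_S V E s S"
    and "valid_w V (E\<inverse>) s wR" and "valid_S V (E\<inverse>) s SR"
  shows "2 * h + z \<le> approx_diam V E s w S wR SR \<and> approx_diam V E s w S wR SR \<le> 3 * h + z"
proof -
  have sc: "strongly_connected V E" using assms(3) unfolding strongly_connected_def .
  have "V \<noteq> {}" using assms(7,8) by auto
  note diam = diameter_bounds_and_attained[OF assms(1) this, of E, unfolded assms(4)]
  obtain a b where "a \<in> V" and "b \<in> V" and "dist E a b = 3 * h + z" using diam(2) by blast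
  then have "2 * h + z \<le> approx_diam V E s w S wR SR"
    using approx_diam_ge_from_pair[OF assms(1,2) sc assms(7,9-12)] assms(5,6) by blast
  moreover have "approx_diam V E s w S wR SR \<le> 3 * h + z"
    using approx_diam_le_bound[OF assms(1,2) sc assms(7) \<open>V \<noteq> {}\<close> assms(9-12) diam(1)] .
  ultimately show ?thesis by simp
qed

end
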